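(* Let $n\ge 2$ and let $\Lambda_n$ be a cycle ordering of the chains of a symmetric chain decomposition of $Q_n$. Then in the corresponding Hamilton cycle, any two chains $C$ and $C'$ with $|C|\equiv|C'|\pmod 4$ are traversed in the same direction (both upwards or both downwards).
   Context: $Q_n$ is the hypercube on $\{0,1\}^n$; level $k$ is the set of strings with $k$ ones. A symmetric chain is a path $(x_k,\ldots,x_{n-k})$ in $Q_n$ with $x_i$ in level $i$; a symmetric chain decomposition (SCD) is a partition of the vertices of $Q_n$ into symmetric chains. The length $|C|$ of a chain is its number of edges; its bottom end is its vertex in the lowest level and its top end its vertex in the highest level. A cycle ordering of the chains of an SCD is a cyclic ordering of all its chains such that the chains together with, for each pair of cyclically consecutive chains, one connecting edge of $Q_n$ form a Hamilton cycle, where the connecting edges join consecutive chains alternately at their top ends and at their bottom ends, with the exception that two consecutive chains of length $1$ are joined by an edge from the bottom end of one of them to the top end of the other. *)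

theory Defs
  imports Main
begin

text \<open>Vertices of the hypercube Q_n are the subsets of {0..<n} (a 0/1 string is
identified with the set of positions carrying a one); the level of a vertex is its
cardinality.\<close>

definition hc_vertex :: "nat \<Rightarrow> nat set \<Rightarrow> bool" where
  "hc_vertex n x \<longleftrightarrow> x \<subseteq> {..<n}"

definition hc_adj :: "nat \<Rightarrow> nat set \<Rightarrow> nat set \<Rightarrow> bool" where
  "hc_adj n x y \<longleftrightarrow> hc_vertex n x \<and> hc_vertex n y \<and> card (x - y) + card (y - x) = 1"

text \<open>A chain is a list of vertices listed from its bottom end to its top end.
A symmetric chain (x_k, ..., x_{n-k}): a path with x_i in level i.\<close>

definition symm_chain :: "nat \<Rightarrow> nat set list \<Rightarrow> bool" where
  "symm_chain n C \<longleftrightarrow> C \<noteq> [] \<and> (\<forall>x\<in>set C. hc_vertex n x)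
     \<and> (\<forall>i<length C. card (C ! i) = card (hd C) + i)
     \<and> card (hd C) + card (last C) = n
     \<and> (\<forall>i. Suc i < length C \<longrightarrow> hc_adj n (C ! i) (C ! Suc i))"

text \<open>Length = number of edges.\<close>
definition chain_len :: "nat set list \<Rightarrow> nat" where
  "chain_len C = length C - 1"

definition bottom_end :: "nat set list \<Rightarrow> nat set" where
  "bottom_end C = hd C"

definition top_end :: "nat set list \<Rightarrow> nat set" where
  "top_end C = last C"

definition chain_end :: "bool \<Rightarrow> nat set list \<Rightarrow> nat set" where
  "chain_end t C = (if t then top_end C else bottom_end C)"

definition SCD :: "nat \<Rightarrow> nat set list set \<Rightarrow> bool" where
  "SCD n D \<longleftrightarrow> (\<forall>C\<in>D. symm_chain n C)
     \<and> (\<forall>x. hc_vertex n x \<longrightarrow> (\<exists>!C. C \<in> D \<and> x \<in> set C))"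

definition hamilton_cycle :: "nat \<Rightarrow> nat set list \<Rightarrow> bool" where
  "hamilton_cycle n H \<longleftrightarrow> distinct H \<and> set H = {x. hc_vertex n x} \<and> 3 \<le> length H
     \<and> (\<forall>i. Suc i < length H \<longrightarrow> hc_adj n (H ! i) (H ! Suc i))
     \<and> hc_adj n (last H) (hd H)"

definition cnext :: "nat \<Rightarrow> nat \<Rightarrow> nat" where
  "cnext m i = Suc i mod m"

definition cprev :: "nat \<Rightarrow> nat \<Rightarrow> nat" where
  "cprev m i = (i + m - 1) mod m"

text \<open>Connecting edge i joins chain L!i to chain L!(cnext m i); it leaves L!i at the end
chain_end (a i) and enters L!(cnext m i) at the end chain_end (b i).
Chain j is therefore entered at end b (cprev m j); it is traversed downwards iff it is
entered at its top end.\<close>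
definition traversed_down :: "nat set list list \<Rightarrow> (nat \<Rightarrow> bool) \<Rightarrow> nat \<Rightarrow> bool" where
  "traversed_down L b j = b (cprev (length L) j)"

definition traversal :: "nat set list list \<Rightarrow> (nat \<Rightarrow> bool) \<Rightarrow> nat \<Rightarrow> nat set list" where
  "traversal L b j = (if traversed_down L b j then rev (L ! j) else L ! j)"

definition exceptional_edge :: "nat set list list \<Rightarrow> nat \<Rightarrow> bool" where
  "exceptional_edge L i \<longleftrightarrow> chain_len (L ! i) = 1 \<and> chain_len (L ! cnext (length L) i) = 1"

text \<open>Cycle ordering of the chains of the SCD D, with connecting edges described by a, b:
 - each connecting edge is an edge of Q_n;
 - two consecutive chains of length 1 are joined bottom-to-top (a i \<noteq> b i), all other
   consecutive pairs top-to-top or bottom-to-bottom (a i = b i);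
 - alternation: a chain entered via a top (bottom) end is left via a bottom (top) end;
 - the chains together with the connecting edges form a Hamilton cycle.\<close>
definition cycle_ordering ::
  "nat \<Rightarrow> nat set list set \<Rightarrow> nat set list list \<Rightarrow> (nat \<Rightarrow> bool) \<Rightarrow> (nat \<Rightarrow> bool) \<Rightarrow> bool" where
  "cycle_ordering n D L a b \<longleftrightarrow> distinct L \<and> set L = D \<and>
     (let m = length L in
       (\<forall>i<m. hc_adj n (chain_end (a i) (L ! i)) (chain_end (b i) (L ! cnext m i))
            \<and> (if exceptional_edge L i then a i \<noteq> b i else a i = b i)
            \<and> b i \<noteq> a (cnext m i))
       \<and> hamilton_cycle n (concat (map (traversal L b) [0..<m]))
       \<and> (\<forall>i<m. last (traversal L b i) = chain_end (a i) (L ! i)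
              \<and> hd (traversal L b (cnext m i)) = chain_end (b i) (L ! cnext m i)))"

end

theory Submission
  imports Defs
begin

text \<open>Two cyclically consecutive chains joined at equal ends have those ends on adjacent levels,
so by symmetry their lengths differ by exactly 2; by alternation of the connecting edges the
second one is traversed in the opposite direction. Two chains joined by an exceptional edge
both have length 1 and are traversed in the same direction. Hence, along the cycle ordering,
whether a chain is traversed downwards agrees (up to one global flip) with whether its length is
2 or 3 modulo 4.\<close>

lemma hc_adj_card:
  assumes "hc_adj n x y"
  shows "card x = Suc (card y) \<or> card y = Suc (card x)"
proof -
  have "finite x" "finite y"
    using assms unfolding hc_adj_def hc_vertex_def by (auto intro: finite_subset)
  then have "card x = card (x \<inter> y) + card (x - y)" "card y = card (x \<inter> y) + card (y - x)"
    by (metis Int_Diff_disjoint Int_Diff_Un card_Un_disjoint finite_Diff finite_Int inf_commute)+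
  moreover have "card (x - y) + card (y - x) = 1"
    using assms unfolding hc_adj_def by blast
  ultimately show ?thesis by arith
qed

lemma symm_chain_end_cards:
  assumes "symm_chain n C"
  shows "2 * card (top_end C) = n + chain_len C" and "2 * card (bottom_end C) + chain_len C = n"
proof -
  have ne: "C \<noteq> []" and levels: "\<forall>i<length C. card (C ! i) = card (hd C) + i"
    and sym: "card (hd C) + card (last C) = n"
    using assms unfolding symm_chain_def by auto
  have "card (last C) = card (hd C) + (length C - 1)"
    using ne levels by (simp add: last_conv_nth)
  then show "2 * card (top_end C) = n + chain_len C" "2 * card (bottom_end C) + chain_len C = n"
    using sym unfolding top_end_def bottom_end_def chain_len_def by linarith+
qed

lemma symm_chains_adj_same_end:
  assumes "symm_chain n C" "symm_chain n C'" "hc_adj n (chain_end t C) (chain_end t C')"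
  shows "chain_len C = chain_len C' + 2 \<or> chain_len C' = chain_len C + 2"
  using symm_chain_end_cards[OF assms(1)] symm_chain_end_cards[OF assms(2)] hc_adj_card[OF assms(3)]
  by (cases t) (auto simp: chain_end_def)

lemma cnext_cprev: "j < m \<Longrightarrow> cnext m (cprev m j) = j"
proof -
  assume "j < m"
  then have "Suc (j + m - 1) mod m = j"
    by simp
  then show ?thesis
    unfolding cnext_def cprev_def by (simp add: mod_Suc_eq)
qed

lemma cprev_cnext: "j < m \<Longrightarrow> cprev m (cnext m j) = j"
  unfolding cnext_def cprev_def
  by (cases "Suc j = m") (simp_all add: mod_add_left_eq)

lemma cnext_less: "j < m \<Longrightarrow> cnext m j < m"
  unfolding cnext_def by simp

lemma cprev_less: "j < m \<Longrightarrow> cprev m j < m"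
  unfolding cprev_def by simp

lemma cycle_ordering_traversed_down_cnext:
  assumes "cycle_ordering n D L a b" and "k < length L"
  shows "traversed_down L b (cnext (length L) k)
           \<longleftrightarrow> (traversed_down L b k \<longleftrightarrow> exceptional_edge L k)"
proof -
  let ?m = "length L"
  have edges: "\<forall>i<?m. (if exceptional_edge L i then a i \<noteq> b i else a i = b i)
                      \<and> b i \<noteq> a (cnext ?m i)"
    using assms(1) unfolding cycle_ordering_def Let_def by blast
  have "b (cprev ?m k) \<noteq> a k"
    using edges cprev_less[OF assms(2)] cnext_cprev[OF assms(2)] by metis
  then have "a k \<longleftrightarrow> \<not> traversed_down L b k"
    unfolding traversed_down_def by blast
  moreover have "traversed_down L b (cnext ?m k) = b k"
    using cprev_cnext[OF assms(2)] unfolding traversed_down_def by simp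
  ultimately show ?thesis
    using edges assms(2) by (cases "exceptional_edge L k") auto
qed

lemma cycle_ordering_chain_len_cnext:
  assumes "SCD n D" and "cycle_ordering n D L a b" and "k < length L"
    and "\<not> exceptional_edge L k"
  shows "chain_len (L ! k) = chain_len (L ! cnext (length L) k) + 2
    \<or> chain_len (L ! cnext (length L) k) = chain_len (L ! k) + 2"
proof -
  let ?m = "length L"
  have chains: "\<forall>C\<in>set L. symm_chain n C"
    using assms(1,2) unfolding SCD_def cycle_ordering_def by blast
  have edges: "\<forall>i<?m. hc_adj n (chain_end (a i) (L ! i)) (chain_end (b i) (L ! cnext ?m i))
                     \<and> (if exceptional_edge L i then a i \<noteq> b i else a i = b i)"
    using assms(2) unfolding cycle_ordering_def Let_def by blast
  have "symm_chain n (L ! k)" "symm_chain n (L ! cnext ?m k)"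
    using chains assms(3) cnext_less[OF assms(3)] by simp_all
  moreover have "hc_adj n (chain_end (b k) (L ! k)) (chain_end (b k) (L ! cnext ?m k))"
    using edges assms(3,4) by fastforce
  ultimately show ?thesis
    by (rule symm_chains_adj_same_end)
qed

lemma two_le_mod4_add2: "2 \<le> (x + 2) mod 4 \<longleftrightarrow> \<not> 2 \<le> (x::nat) mod 4"
  by presburger

lemma cycle_ordering_direction_vs_len_mod4_cnext:
  assumes "SCD n D" and "cycle_ordering n D L a b" and "k < length L"
  defines "P j \<equiv> traversed_down L b j \<longleftrightarrow> 2 \<le> chain_len (L ! j) mod 4"
  shows "P (cnext (length L) k) = P k"
proof (cases "exceptional_edge L k")
  case True
  then have "chain_len (L ! cnext (length L) k) = chain_len (L ! k)"
    unfolding exceptional_edge_def by simp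
  with True show ?thesis
    using cycle_ordering_traversed_down_cnext[OF assms(2,3)] unfolding P_def by simp
next
  case False
  then have "2 \<le> chain_len (L ! cnext (length L) k) mod 4 \<longleftrightarrow> \<not> 2 \<le> chain_len (L ! k) mod 4"
    using cycle_ordering_chain_len_cnext[OF assms(1-3)] two_le_mod4_add2 by fastforce
  with False show ?thesis
    using cycle_ordering_traversed_down_cnext[OF assms(2,3)] unfolding P_def by simp
qed

theorem lemma16:
  fixes n :: nat and D :: "nat set list set" and L :: "nat set list list"
    and a b :: "nat \<Rightarrow> bool" and i j :: nat
  assumes "2 \<le> n"
    and "SCD n D"
    and "cycle_ordering n D L a b"
    and "i < length L" and "j < length L"
    and "chain_len (L ! i) mod 4 = chain_len (L ! j) mod 4"
  shows "traversed_down L b i = traversed_down L b j"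
proof -
  define P where "P k \<longleftrightarrow> traversed_down L b k \<longleftrightarrow> 2 \<le> chain_len (L ! k) mod 4" for k
  have "P (Suc k) = P k" if "Suc k < length L" for k
    using cycle_ordering_direction_vs_len_mod4_cnext[OF assms(2,3), of k] that
    unfolding P_def cnext_def by simp
  then have "P k = P 0" if "k < length L" for k
    using that by (induction k) auto
  then have "P i = P j"
    using assms(4,5) by metis
  then show ?thesis
    using assms(6) unfolding P_def by auto
qed

end
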